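(* Let $H$ be an uncoloured graph and let $S\subseteq E(H)$. Then there exists a half-edge $2$-colouring $d$ of $H$ such that $(H,d)$ is a W-cone and every edge of $S$ is bichromatic if and only if $H$ is matching-covered and contains a universal vertex $v$ that is incident with a pair of parallel edges and with every edge of $S$.
   Context: Graphs may have parallel edges but no loops. A vertex is universal if it is adjacent to all other vertices. A half-edge $2$-colouring $d$ of $H$ assigns to each pair $(e,w)$ with $w$ an endpoint of edge $e$ a colour in $\{0,1\}$ (0 = blue, 1 = red). An edge $e=uv$ is bichromatic if $d(e,u)\neq d(e,v)$ and monochromatic otherwise; $E_b(H)$, $E_m(H)$ denote the bichromatic and monochromatic edge sets; standing convention: monochromatic edges are blue at both ends. A graph is matching-covered if every edge lies in some perfect matching. A W-cone is a half-edge $2$-coloured matching-covered graph $(H,d)$ containing a universal vertex $v$ (the apex) such that the set of edges incident with $v$ equals $E_b(H)$, $E(H-v)=E_m(H)$, and every vertex $u$ is incident with an edge $e$ with $d(e,u)=1$. *)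

theory Defs
  imports Main
begin

text \<open>A finite multigraph (parallel edges allowed, no loops): vertex set V, edge set E,
  and an endpoint map; every edge has exactly two distinct endpoints in V.\<close>
definition multigraph :: "'v set \<Rightarrow> 'e set \<Rightarrow> ('e \<Rightarrow> 'v set) \<Rightarrow> bool" where
  "multigraph V E ends \<longleftrightarrow> finite V \<and> finite E \<and>
     (\<forall>e\<in>E. ends e \<subseteq> V \<and> card (ends e) = 2)"

definition adjacent :: "'e set \<Rightarrow> ('e \<Rightarrow> 'v set) \<Rightarrow> 'v \<Rightarrow> 'v \<Rightarrow> bool" where
  "adjacent E ends u w \<longleftrightarrow> (\<exists>e\<in>E. ends e = {u, w})"

definition universal :: "'v set \<Rightarrow> 'e set \<Rightarrow> ('e \<Rightarrow> 'v set) \<Rightarrow> 'v \<Rightarrow> bool" where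
  "universal V E ends v \<longleftrightarrow> v \<in> V \<and> (\<forall>u\<in>V. u \<noteq> v \<longrightarrow> adjacent E ends v u)"

definition perfect_matching :: "'v set \<Rightarrow> 'e set \<Rightarrow> ('e \<Rightarrow> 'v set) \<Rightarrow> 'e set \<Rightarrow> bool" where
  "perfect_matching V E ends M \<longleftrightarrow> M \<subseteq> E \<and>
     (\<forall>e\<in>M. \<forall>f\<in>M. e \<noteq> f \<longrightarrow> ends e \<inter> ends f = {}) \<and>
     (\<forall>u\<in>V. \<exists>e\<in>M. u \<in> ends e)"

definition matching_covered :: "'v set \<Rightarrow> 'e set \<Rightarrow> ('e \<Rightarrow> 'v set) \<Rightarrow> bool" where
  "matching_covered V E ends \<longleftrightarrow> (\<forall>e\<in>E. \<exists>M. perfect_matching V E ends M \<and> e \<in> M)"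

text \<open>Half-edge 2-colouring: colour 0 = blue, 1 = red. Standing convention:
  monochromatic edges are blue at both ends.\<close>
definition bichromatic :: "('e \<Rightarrow> 'v set) \<Rightarrow> ('e \<Rightarrow> 'v \<Rightarrow> nat) \<Rightarrow> 'e \<Rightarrow> bool" where
  "bichromatic ends d e \<longleftrightarrow> (\<exists>u\<in>ends e. \<exists>w\<in>ends e. d e u \<noteq> d e w)"

definition half_edge_colouring :: "'e set \<Rightarrow> ('e \<Rightarrow> 'v set) \<Rightarrow> ('e \<Rightarrow> 'v \<Rightarrow> nat) \<Rightarrow> bool" where
  "half_edge_colouring E ends d \<longleftrightarrow>
     (\<forall>e\<in>E. \<forall>w\<in>ends e. d e w \<in> {0, 1}) \<and>
     (\<forall>e\<in>E. \<not> bichromatic ends d e \<longrightarrow> (\<forall>w\<in>ends e. d e w = 0))"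

definition W_cone :: "'v set \<Rightarrow> 'e set \<Rightarrow> ('e \<Rightarrow> 'v set) \<Rightarrow> ('e \<Rightarrow> 'v \<Rightarrow> nat) \<Rightarrow> bool" where
  "W_cone V E ends d \<longleftrightarrow> half_edge_colouring E ends d \<and> matching_covered V E ends \<and>
     (\<exists>v. universal V E ends v \<and>
        {e\<in>E. v \<in> ends e} = {e\<in>E. bichromatic ends d e} \<and>
        {e\<in>E. v \<notin> ends e} = {e\<in>E. \<not> bichromatic ends d e} \<and>
        (\<forall>u\<in>V. \<exists>e\<in>E. u \<in> ends e \<and> d e u = 1))"

end

theory Submission
  imports Defs
begin

text \<open>In a W-cone with apex \<open>v\<close>, the bichromatic edges are exactly those at \<open>v\<close> and
  monochromatic edges are blue at both ends. Let \<open>vw\<close> be an edge that is red at \<open>v\<close>; its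
  \<open>w\<close>-end is blue. The red half-edge at \<open>w\<close> cannot lie on a monochromatic edge, so it lies
  on a second edge joining \<open>v\<close> and \<open>w\<close>. Conversely, given parallel edges \<open>e\<^sub>1, e\<^sub>2\<close> at a
  universal vertex \<open>v\<close>, colour \<open>e\<^sub>1\<close> red at \<open>v\<close>, every other edge at \<open>v\<close> red at its far
  end, and all remaining edges blue: every vertex other than \<open>v\<close> then sees a red
  half-edge, the far end of \<open>e\<^sub>1\<close> via \<open>e\<^sub>2\<close>.\<close>

lemma multigraph_edge:
  assumes "multigraph V E ends" "e \<in> E"
  shows "ends e \<subseteq> V" "card (ends e) = 2"
  using assms unfolding multigraph_def by blast+

lemma card_2_other_elem:
  assumes "card A = 2" "v \<in> A"
  obtains w where "A = {v, w}" "w \<noteq> v"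
  using assms by (auto simp: card_2_iff)

lemma multigraph_edge_other_end:
  assumes "multigraph V E ends" "e \<in> E" "v \<in> ends e"
  obtains w where "ends e = {v, w}" "w \<noteq> v" "w \<in> V"
  using assms multigraph_edge[OF assms(1,2)] card_2_other_elem by (metis insert_subset)

lemma bichromatic_two_ends:
  assumes "ends e = {u, w}"
  shows "bichromatic ends d e \<longleftrightarrow> d e u \<noteq> d e w"
  using assms unfolding bichromatic_def by auto

lemma W_cone_apex:
  assumes "W_cone V E ends d"
  obtains v where "universal V E ends v"
    "\<And>e. e \<in> E \<Longrightarrow> v \<in> ends e \<longleftrightarrow> bichromatic ends d e"
    "\<And>u. u \<in> V \<Longrightarrow> \<exists>e\<in>E. u \<in> ends e \<and> d e u = 1"
  using assms unfolding W_cone_def set_eq_iff by blast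

lemma apex_has_parallel_edges:
  assumes G: "multigraph V E ends" and col: "half_edge_colouring E ends d" and "v \<in> V"
    and apex: "\<And>e. e \<in> E \<Longrightarrow> v \<in> ends e \<longleftrightarrow> bichromatic ends d e"
    and red: "\<And>u. u \<in> V \<Longrightarrow> \<exists>e\<in>E. u \<in> ends e \<and> d e u = 1"
  shows "\<exists>e1\<in>E. \<exists>e2\<in>E. e1 \<noteq> e2 \<and> ends e1 = ends e2 \<and> v \<in> ends e1"
proof -
  have binary: "d e x \<in> {0, 1}" if "e \<in> E" "x \<in> ends e" for e x
    using col that unfolding half_edge_colouring_def by blast
  have blue: "d e x = 0" if "e \<in> E" "\<not> bichromatic ends d e" "x \<in> ends e" for e x
    using col that unfolding half_edge_colouring_def by blast
  obtain e' where e': "e' \<in> E" "v \<in> ends e'" "d e' v = 1"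
    using red \<open>v \<in> V\<close> by blast
  obtain w where w: "ends e' = {v, w}" "w \<noteq> v" "w \<in> V"
    using multigraph_edge_other_end[OF G e'(1,2)] .
  have "d e' w = 0"
    using apex[OF e'(1)] e' w(1) binary[OF e'(1)] bichromatic_two_ends[of ends e' v w d, OF w(1)] by fastforce
  obtain e where e: "e \<in> E" "w \<in> ends e" "d e w = 1"
    using red \<open>w \<in> V\<close> by blast
  have "v \<in> ends e"
    using apex[OF e(1)] blue[OF e(1) _ e(2)] e(3) by auto
  then obtain x where "ends e = {v, x}"
    using multigraph_edge_other_end[OF G e(1)] by blast
  with e(2) w have "ends e = ends e'" by auto
  moreover have "e \<noteq> e'"
    using e(3) \<open>d e' w = 0\<close> by auto
  ultimately show ?thesis
    using e(1) e'(1) \<open>v \<in> ends e\<close> by blast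
qed

definition cone_colouring :: "('e \<Rightarrow> 'v set) \<Rightarrow> 'v \<Rightarrow> 'e \<Rightarrow> 'e \<Rightarrow> 'v \<Rightarrow> nat" where
  "cone_colouring ends v e1 e x = (if v \<in> ends e \<and> ((x = v) \<longleftrightarrow> e = e1) then 1 else 0)"

lemma bichromatic_cone_colouring:
  assumes "multigraph V E ends" "e \<in> E"
  shows "bichromatic ends (cone_colouring ends v e1) e \<longleftrightarrow> v \<in> ends e"
proof (cases "v \<in> ends e")
  case True
  then obtain w where "ends e = {v, w}" "w \<noteq> v"
    using multigraph_edge_other_end[OF assms] by blast
  then show ?thesis
    using True by (simp add: bichromatic_two_ends cone_colouring_def)
qed (simp add: bichromatic_def cone_colouring_def)

lemma half_edge_colouring_cone_colouring:
  assumes "multigraph V E ends"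
  shows "half_edge_colouring E ends (cone_colouring ends v e1)"
  using bichromatic_cone_colouring[OF assms]
  unfolding half_edge_colouring_def by (simp add: cone_colouring_def)

lemma cone_colouring_red_everywhere:
  assumes "universal V E ends v"
    and e12: "e1 \<in> E" "e2 \<in> E" "e1 \<noteq> e2" "ends e1 = ends e2" "v \<in> ends e1"
    and "u \<in> V"
  shows "\<exists>e\<in>E. u \<in> ends e \<and> cone_colouring ends v e1 e u = 1"
proof (cases "u = v")
  case True
  then show ?thesis
    using e12 by (auto simp: cone_colouring_def)
next
  case False
  then obtain e where e: "e \<in> E" "ends e = {v, u}"
    using assms(1) \<open>u \<in> V\<close> unfolding universal_def adjacent_def by blast
  show ?thesis
  proof (cases "e = e1")
    case True
    then show ?thesis
      using e12 e(2) False by (auto simp: cone_colouring_def)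
  next
    case False
    then show ?thesis
      using e \<open>u \<noteq> v\<close> by (auto simp: cone_colouring_def)
  qed
qed

lemma W_cone_cone_colouring:
  assumes G: "multigraph V E ends" and "matching_covered V E ends" "universal V E ends v"
    and "e1 \<in> E" "e2 \<in> E" "e1 \<noteq> e2" "ends e1 = ends e2" "v \<in> ends e1"
  shows "W_cone V E ends (cone_colouring ends v e1)"
  unfolding W_cone_def
  using assms half_edge_colouring_cone_colouring[OF G] bichromatic_cone_colouring[OF G]
    cone_colouring_red_everywhere[OF assms(3-8)]
  by blast

theorem mainTheorem16:
  fixes V :: "'v set" and E :: "'e set" and ends :: "'e \<Rightarrow> 'v set" and S :: "'e set"
  assumes "multigraph V E ends" and "S \<subseteq> E"
  shows "(\<exists>d. W_cone V E ends d \<and> (\<forall>e\<in>S. bichromatic ends d e)) \<longleftrightarrow>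
    (matching_covered V E ends \<and>
     (\<exists>v. universal V E ends v \<and>
        (\<exists>e1\<in>E. \<exists>e2\<in>E. e1 \<noteq> e2 \<and> ends e1 = ends e2 \<and> v \<in> ends e1) \<and>
        (\<forall>e\<in>S. v \<in> ends e)))"
proof
  assume "\<exists>d. W_cone V E ends d \<and> (\<forall>e\<in>S. bichromatic ends d e)"
  then obtain d where W: "W_cone V E ends d" and S: "\<forall>e\<in>S. bichromatic ends d e"
    by blast
  obtain v where v: "universal V E ends v"
    "\<And>e. e \<in> E \<Longrightarrow> v \<in> ends e \<longleftrightarrow> bichromatic ends d e"
    "\<And>u. u \<in> V \<Longrightarrow> \<exists>e\<in>E. u \<in> ends e \<and> d e u = 1"
    using W_cone_apex[OF W] by blast
  have "v \<in> V" "half_edge_colouring E ends d" "matching_covered V E ends"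
    using v(1) W unfolding universal_def W_cone_def by blast+
  then show "matching_covered V E ends \<and> (\<exists>v. universal V E ends v \<and>
      (\<exists>e1\<in>E. \<exists>e2\<in>E. e1 \<noteq> e2 \<and> ends e1 = ends e2 \<and> v \<in> ends e1) \<and> (\<forall>e\<in>S. v \<in> ends e))"
    using apex_has_parallel_edges[OF assms(1) _ _ v(2,3)] v(1,2) S assms(2) by blast
next
  assume "matching_covered V E ends \<and> (\<exists>v. universal V E ends v \<and>
      (\<exists>e1\<in>E. \<exists>e2\<in>E. e1 \<noteq> e2 \<and> ends e1 = ends e2 \<and> v \<in> ends e1) \<and> (\<forall>e\<in>S. v \<in> ends e))"
  then obtain v e1 e2 where "matching_covered V E ends" "universal V E ends v"
    and e12: "e1 \<in> E" "e2 \<in> E" "e1 \<noteq> e2" "ends e1 = ends e2" "v \<in> ends e1"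
    and S: "\<forall>e\<in>S. v \<in> ends e"
    by blast
  then have "W_cone V E ends (cone_colouring ends v e1)"
    using W_cone_cone_colouring[OF assms(1)] by blast
  moreover have "\<forall>e\<in>S. bichromatic ends (cone_colouring ends v e1) e"
    using S assms(2) bichromatic_cone_colouring[OF assms(1)] by blast
  ultimately show "\<exists>d. W_cone V E ends d \<and> (\<forall>e\<in>S. bichromatic ends d e)"
    by blast
qed

end
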